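(* Let $\square$ be a finite cube, $\mathbf a$ a configuration and $F\subset E_d(\square)$ such that every edge of $F$ has both endpoints in $\mathscr C_{bc}^{\mathbf a^F}(\square)$. Let $u$ follow the canonical grain extension rule relative to $\mathbf a$ on $\square$. Then for every $G\subset F$ and every $x\in\square\setminus\mathscr C_{bc}^{\mathbf a^F}(\square)$, $u^G(x)=u^G([x])$; consequently $(D_Fu)(x)=(D_Fu)([x])$ for every such $x$.
   Context: Bond configurations $\mathbf a\in\{0,1\}^{E_d}$ on $\mathbb Z^d$, with $\ell^\infty$ distance $\mathrm{dist}$. For a cube $\square$: $E_d(\square)$ its nearest-neighbour edges, $\partial\square=\{x\in\square:\exists y\sim x,y\notin\square\}$. For a configuration $\mathbf b$, $\mathscr C_{bc}^{\mathbf b}(\square)=\{x\in\square: x$ is joined to $\partial\square$ by a $\mathbf b$-open path inside $\square\}$ (boundary-connecting clusters; it contains $\partial\square$), and for $x\in\square$, $\mathcal O^{\mathbf b}(x)$ is the set of vertices joined to $x$ by a $\mathbf b$-open path inside $\square$. $\mathbf a^G(e)=\mathbf 1_{e\in G}+\mathbf a(e)\mathbf 1_{e\notin G}$. Canonical grain relative to base $\mathbf a$: for $G\subset E_d(\square)$, $[x]^G=x$ if $x\in\mathscr C_{bc}^{\mathbf a^G}(\square)$, and otherwise $[x]^G=\arg\min_{y\in\mathscr C_{bc}^{\mathbf a}(\square)}\mathrm{dist}(y,\mathcal O^{\mathbf a^G}(x))$ with ties broken by a fixed lexicographic order; $[x]=[x]^\emptyset$. A function $u$ of the configuration and of $x\in\square$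 follows the canonical grain extension rule (relative to $\mathbf a$) if $u(\mathbf a^G,x)=u(\mathbf a^G,[x]^G)$ for all $G\subset E_d(\square)$, $x\in\square$. Write $u^G(x)=u(\mathbf a^G,x)$ and $(D_Fu)(x)=\sum_{G\subset F}(-1)^{|F\setminus G|}u^G(x)$. *)

theory Defs
  imports Complex_Main
begin

text \<open>Vertices of Z^d: functions nat => int vanishing outside {0..<d}.
 Edges: two-element vertex sets {x,y} of nearest neighbours.
 Configurations: functions from (edge) sets to bool (only values on edges matter).\<close>

type_synonym vert = "nat \<Rightarrow> int"
type_synonym config = "vert set \<Rightarrow> bool"

definition cube :: "nat \<Rightarrow> vert \<Rightarrow> nat \<Rightarrow> vert set" where
  "cube d z L = {x. (\<forall>i<d. z i \<le> x i \<and> x i \<le> z i + int L) \<and> (\<forall>i\<ge>d. x i = 0)}"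

definition adj :: "nat \<Rightarrow> vert \<Rightarrow> vert \<Rightarrow> bool" where
  "adj d x y \<longleftrightarrow> (\<forall>i\<ge>d. x i = 0 \<and> y i = 0) \<and> (\<Sum>i<d. \<bar>x i - y i\<bar>) = 1"

definition linf :: "nat \<Rightarrow> vert \<Rightarrow> vert \<Rightarrow> int" where
  "linf d x y = Max ((\<lambda>i. \<bar>x i - y i\<bar>) ` {..<d})"

definition setdist :: "nat \<Rightarrow> vert \<Rightarrow> vert set \<Rightarrow> int" where
  "setdist d y S = Min (linf d y ` S)"

definition lexless :: "nat \<Rightarrow> vert \<Rightarrow> vert \<Rightarrow> bool" where
  "lexless d x y \<longleftrightarrow> (\<exists>k<d. (\<forall>i<k. x i = y i) \<and> x k < y k)"

definition cube_edges :: "nat \<Rightarrow> vert set \<Rightarrow> vert set set" where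
  "cube_edges d Q = {{x, y} | x y. x \<in> Q \<and> y \<in> Q \<and> adj d x y}"

definition bdry :: "nat \<Rightarrow> vert set \<Rightarrow> vert set" where
  "bdry d Q = {x \<in> Q. \<exists>y. adj d x y \<and> y \<notin> Q}"

definition open_step :: "nat \<Rightarrow> vert set \<Rightarrow> config \<Rightarrow> vert \<Rightarrow> vert \<Rightarrow> bool" where
  "open_step d Q b x y \<longleftrightarrow> x \<in> Q \<and> y \<in> Q \<and> adj d x y \<and> b {x, y}"

definition joined :: "nat \<Rightarrow> vert set \<Rightarrow> config \<Rightarrow> vert \<Rightarrow> vert \<Rightarrow> bool" where
  "joined d Q b x y \<longleftrightarrow> x \<in> Q \<and> (open_step d Q b)\<^sup>*\<^sup>* x y"

definition cluster :: "nat \<Rightarrow> vert set \<Rightarrow> config \<Rightarrow> vert \<Rightarrow> vert set" where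
  "cluster d Q b x = {y. joined d Q b x y}"

definition Cbc :: "nat \<Rightarrow> vert set \<Rightarrow> config \<Rightarrow> vert set" where
  "Cbc d Q b = {x \<in> Q. \<exists>y \<in> bdry d Q. joined d Q b x y}"

definition upd :: "config \<Rightarrow> vert set set \<Rightarrow> config" where
  "upd a G = (\<lambda>e. e \<in> G \<or> a e)"

definition grain :: "nat \<Rightarrow> vert set \<Rightarrow> config \<Rightarrow> vert set set \<Rightarrow> vert \<Rightarrow> vert" where
  "grain d Q a G x =
    (if x \<in> Cbc d Q (upd a G) then x
     else (THE y. y \<in> Cbc d Q a
              \<and> (\<forall>y' \<in> Cbc d Q a. setdist d y (cluster d Q (upd a G) x) \<le> setdist d y' (cluster d Q (upd a G) x))
              \<and> (\<forall>y' \<in> Cbc d Q a. setdist d y' (cluster d Q (upd a G) x) = setdist d y (cluster d Q (upd a G) x)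
                     \<longrightarrow> y' = y \<or> lexless d y y')))"

definition follows_grain_rule :: "nat \<Rightarrow> vert set \<Rightarrow> config \<Rightarrow> (config \<Rightarrow> vert \<Rightarrow> 'r) \<Rightarrow> bool" where
  "follows_grain_rule d Q a u \<longleftrightarrow>
     (\<forall>G \<subseteq> cube_edges d Q. \<forall>x \<in> Q. u (upd a G) x = u (upd a G) (grain d Q a G x))"

definition DF :: "config \<Rightarrow> vert set set \<Rightarrow> (config \<Rightarrow> vert \<Rightarrow> real) \<Rightarrow> vert \<Rightarrow> real" where
  "DF a F u x = (\<Sum>G \<in> Pow F. (-1) ^ card (F - G) * u (upd a G) x)"

end

theory Submission
  imports Defs
begin

text \<open>Let \<open>x\<close> lie outside \<open>\<C>\<^sub>b\<^sub>c(a\<^sup>F)\<close> and \<open>G \<subseteq> F\<close>. An \<open>a\<^sup>G\<close>-open path from \<open>x\<close> never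
  reaches \<open>\<C>\<^sub>b\<^sub>c(a\<^sup>F)\<close>, since otherwise \<open>x\<close> itself would be joined to the boundary in \<open>a\<^sup>F\<close>.
  As every edge of \<open>F\<close> has its endpoints in \<open>\<C>\<^sub>b\<^sub>c(a\<^sup>F)\<close>, such a path uses no edge of \<open>F\<close> and is
  therefore \<open>a\<close>-open. So the clusters of \<open>x\<close> under \<open>a\<^sup>G\<close> and under \<open>a\<close> coincide, hence so do
  the grains \<open>[x]\<^sup>G\<close> and \<open>[x]\<close>, and the grain extension rule gives \<open>u\<^sup>G(x) = u\<^sup>G([x])\<close>.\<close>

lemma upd_empty [simp]: "upd a {} = a"
  by (simp add: upd_def)

lemma upd_mono: "G \<subseteq> F \<Longrightarrow> upd a G e \<Longrightarrow> upd a F e"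
  by (auto simp: upd_def)

lemma le_upd: "a e \<Longrightarrow> upd a G e"
  by (simp add: upd_def)

lemma joined_mono:
  assumes "\<And>e. b e \<Longrightarrow> b' e" and "joined d Q b x y"
  shows "joined d Q b' x y"
proof -
  have "(open_step d Q b)\<^sup>*\<^sup>* x y" "x \<in> Q"
    using assms(2) by (auto simp: joined_def)
  have "open_step d Q b \<le> open_step d Q b'"
    using assms(1) by (auto simp: open_step_def)
  then have "(open_step d Q b')\<^sup>*\<^sup>* x y"
    using \<open>(open_step d Q b)\<^sup>*\<^sup>* x y\<close> by (metis rtranclp_mono predicate2D)
  then show ?thesis
    using \<open>x \<in> Q\<close> by (simp add: joined_def)
qed

lemma joined_trans: "joined d Q b x y \<Longrightarrow> joined d Q b y w \<Longrightarrow> joined d Q b x w"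
  by (auto simp: joined_def)

lemma Cbc_mono: "(\<And>e. b e \<Longrightarrow> b' e) \<Longrightarrow> Cbc d Q b \<subseteq> Cbc d Q b'"
  using joined_mono[of b b'] unfolding Cbc_def by blast

lemma joined_not_Cbc:
  assumes "x \<notin> Cbc d Q b" and "joined d Q b x y"
  shows "y \<notin> Cbc d Q b"
  using assms joined_trans[OF assms(2)] by (auto simp: Cbc_def joined_def)

lemma joined_upd_imp_joined:
  assumes edges_in_Cbc: "\<forall>e \<in> F. e \<subseteq> Cbc d Q (upd a F)"
    and x: "x \<notin> Cbc d Q (upd a F)" and xy: "joined d Q (upd a F) x y"
  shows "joined d Q a x y"
proof -
  have "x \<in> Q" "(open_step d Q (upd a F))\<^sup>*\<^sup>* x y"
    using xy by (auto simp: joined_def)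
  from this(2) have "(open_step d Q a)\<^sup>*\<^sup>* x y"
  proof (induction rule: rtranclp_induct)
    case base
    show ?case by simp
  next
    case (step y w)
    have "y \<notin> Cbc d Q (upd a F)"
      using joined_not_Cbc[OF x] step.hyps(1) \<open>x \<in> Q\<close> by (simp add: joined_def)
    then have "{y, w} \<notin> F"
      using edges_in_Cbc by auto
    then have "open_step d Q a y w"
      using step.hyps(2) by (auto simp: open_step_def upd_def)
    with step.IH show ?case
      by simp
  qed
  with \<open>x \<in> Q\<close> show ?thesis
    by (simp add: joined_def)
qed

lemma cluster_upd_eq_cluster:
  assumes "G \<subseteq> F" and "\<forall>e \<in> F. e \<subseteq> Cbc d Q (upd a F)" and "x \<notin> Cbc d Q (upd a F)"
  shows "cluster d Q (upd a G) x = cluster d Q a x"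
proof
  show "cluster d Q (upd a G) x \<subseteq> cluster d Q a x"
    using joined_upd_imp_joined[OF assms(2,3)] joined_mono[OF upd_mono[OF assms(1)]]
    by (auto simp: cluster_def)
  show "cluster d Q a x \<subseteq> cluster d Q (upd a G) x"
    using joined_mono[OF le_upd] by (auto simp: cluster_def)
qed

lemma grain_upd_eq_grain_empty:
  assumes "G \<subseteq> F" and "\<forall>e \<in> F. e \<subseteq> Cbc d Q (upd a F)" and x: "x \<notin> Cbc d Q (upd a F)"
  shows "grain d Q a G x = grain d Q a {} x"
proof -
  have "Cbc d Q (upd a G) \<subseteq> Cbc d Q (upd a F)"
    by (rule Cbc_mono) (erule upd_mono[OF assms(1)])
  moreover have "Cbc d Q a \<subseteq> Cbc d Q (upd a F)"
    by (rule Cbc_mono) (rule le_upd)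
  ultimately have "x \<notin> Cbc d Q (upd a G)" "x \<notin> Cbc d Q a"
    using x by blast+
  then show ?thesis
    unfolding grain_def upd_empty cluster_upd_eq_cluster[OF assms] by (simp only: if_False)
qed

theorem lemma6p1:
  fixes d :: nat and z :: vert and L :: nat and a :: config and F :: "vert set set"
    and u :: "config \<Rightarrow> vert \<Rightarrow> real"
  assumes "1 \<le> d"
    and "F \<subseteq> cube_edges d (cube d z L)"
    and "\<forall>e \<in> F. e \<subseteq> Cbc d (cube d z L) (upd a F)"
    and "follows_grain_rule d (cube d z L) a u"
  shows "(\<forall>G \<subseteq> F. \<forall>x \<in> cube d z L - Cbc d (cube d z L) (upd a F).
            u (upd a G) x = u (upd a G) (grain d (cube d z L) a {} x))
       \<and> (\<forall>x \<in> cube d z L - Cbc d (cube d z L) (upd a F).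
            DF a F u x = DF a F u (grain d (cube d z L) a {} x))"
proof -
  have u_eq: "u (upd a G) x = u (upd a G) (grain d (cube d z L) a {} x)"
    if "G \<subseteq> F" and "x \<in> cube d z L - Cbc d (cube d z L) (upd a F)" for G x
  proof -
    have "u (upd a G) x = u (upd a G) (grain d (cube d z L) a G x)"
      using assms(2,4) that unfolding follows_grain_rule_def by blast
    also have "grain d (cube d z L) a G x = grain d (cube d z L) a {} x"
      using grain_upd_eq_grain_empty[OF that(1) assms(3)] that(2) by simp
    finally show ?thesis .
  qed
  then have "DF a F u x = DF a F u (grain d (cube d z L) a {} x)"
    if "x \<in> cube d z L - Cbc d (cube d z L) (upd a F)" for x
    using that unfolding DF_def by (intro sum.cong) auto
  with u_eq show ?thesis
    by blast
qed

end
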